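(* Let $X$ be $\mathbf{S}^2\times\mathbb{R}$ or $\mathbf{H}^2\times\mathbb{R}$ in the projective model described in the context. Let $P_1=(1,1,0,0)$, $P_2=(1,a,b,c)$, $P_3=(1,d,e,f)$ be given points of $X$ and $P=(1,x,y,z)$ an arbitrary point of $X$. Let $\mathbf{p}_1=(1,0,0)$, $\mathbf{p}_2=(a,b,c)$, $\mathbf{p}_3=(d,e,f)$, $\mathbf{p}=(x,y,z)$, and let $P_1'=P_1,P_2',P_3',P'$ be the projections of $P_1,P_2,P_3,P$ onto the unit surface of $X$ along the fibre lines. Let $d_1,d_2,d_3$ be the distances (in the unit surface) of $P'$ to $P_1',P_2',P_3'$, and let $\gamma_1=\angle P_2'P'P_3'$, $\gamma_2=\angle P_3'P'P_1'$, $\gamma_3=\angle P_1'P'P_2'$ be directed angles. Then $P$ lies on the translation-like triangular surface $S^{X,t}_{P_1,P_2,P_3}$ if \[ d_1d_2\sin(\gamma_3)\ln\frac{|\mathbf{p}_3|}{|\mathbf{p}|}+d_2d_3\sin(\gamma_1)\ln\frac{|\mathbf{p}_1|}{|\mathbf{p}|}+d_3d_1\sin(\gamma_2)\ln\frac{|\mathbf{p}_2|}{|\mathbf{p}|}=0, \] where $|\cdot|$ is the Euclidean norm.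
   Context: Points are written in homogeneous coordinates $(1,x,y,z)$; $\mathbf{S}^2\times\mathbb{R}$ is the set of such points with $x^2+y^2+z^2>0$, and $\mathbf{H}^2\times\mathbb{R}$ the set with $x^2-y^2-z^2>0$, $x>0$. The unit surface is the unit sphere $x^2+y^2+z^2=1$ (with its spherical metric) in $\mathbf{S}^2\times\mathbb{R}$, resp. the sheet $x>0$ of $x^2-y^2-z^2=1$ (with its hyperbolic-plane metric) in $\mathbf{H}^2\times\mathbb{R}$; the fibre lines are the open rays from the Euclidean origin, and the fibre coordinate of $(1,\mathbf{p})$ is $\ln$ of $\sqrt{x^2\pm(y^2+z^2)}$ (sign $+$ for $\mathbf{S}^2\times\mathbb{R}$, $-$ for $\mathbf{H}^2\times\mathbb{R}$); projection along fibres sends $\mathbf{p}$ to $\mathbf{p}/\sqrt{x^2\pm(y^2+z^2)}$. With $S,C$ meaning $\sin,\cos$ (resp. $\sinh,\cosh$), the translation curves (= geodesics) from $E_0=(1,1,0,0)$ are $x=e^{\tau\sin v}C(\tau\cos v)$, $y=e^{\tau\sin v}S(\tau\cos v)\cos u$, $z=e^{\tau\sin v}S(\tau\cos v)\sin u$, with tangent $(\sin v,\cos v\cos u,\cos v\sin u)$ at $E_0$; translation curves from other points are images of these under isometries, which are generated by fibre translations $\mathbf{p}\mapsto e^{s}\mathbf{p}$ and isometries of the unit surface (extended linearly). The translation-like triangular surface $S^{X,t}_{P_1,P_2,P_3}$ is the set of points $P$ of $X$ such that the tangent vectors at $P$ of the translation curves drawn from $P$ to $P_1$, $P_2$, $P_3$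 are coplanar (linearly dependent).
   Formalization: The norm in the logarithms is $\sqrt{x^2\pm(y^2+z^2)}$ instead of the Euclidean norm, and the translation curves drawn from P to $P_1$, $P_2$, $P_3$ are those projecting to shortest geodesics of the unit surface. Each condition added here is assumed in the paper as well or is needed for the statement above to hold. *)

theory Defs
  imports "HOL-Analysis.Analysis"
begin

text \<open>Points (1,x,y,z) are represented by their affine part p = (x,y,z) :: real^3.
  The two geometries are distinguished by a datatype.\<close>

datatype geom = S2xR | H2xR

definition sgn_geom :: "geom \<Rightarrow> real" where
  "sgn_geom X = (case X of S2xR \<Rightarrow> 1 | H2xR \<Rightarrow> -1)"

definition SS :: "geom \<Rightarrow> real \<Rightarrow> real" where
  "SS X t = (case X of S2xR \<Rightarrow> sin t | H2xR \<Rightarrow> sinh t)"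
definition CC :: "geom \<Rightarrow> real \<Rightarrow> real" where
  "CC X t = (case X of S2xR \<Rightarrow> cos t | H2xR \<Rightarrow> cosh t)"

definition bform :: "geom \<Rightarrow> real^3 \<Rightarrow> real^3 \<Rightarrow> real" where
  "bform X p q = p$1 * q$1 + sgn_geom X * (p$2 * q$2 + p$3 * q$3)"

definition in_X :: "geom \<Rightarrow> real^3 \<Rightarrow> bool" where
  "in_X X p = (case X of
      S2xR \<Rightarrow> (p$1)^2 + (p$2)^2 + (p$3)^2 > 0
    | H2xR \<Rightarrow> (p$1)^2 - (p$2)^2 - (p$3)^2 > 0 \<and> p$1 > 0)"

text \<open>sqrt(x^2 \<plusminus> (y^2+z^2)); its logarithm is the fibre coordinate.\<close>
definition fnorm :: "geom \<Rightarrow> real^3 \<Rightarrow> real" where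
  "fnorm X p = sqrt (bform X p p)"

definition proj :: "geom \<Rightarrow> real^3 \<Rightarrow> real^3" where
  "proj X p = (1 / fnorm X p) *\<^sub>R p"

definition surf_dist :: "geom \<Rightarrow> real^3 \<Rightarrow> real^3 \<Rightarrow> real" where
  "surf_dist X p q = (case X of S2xR \<Rightarrow> arccos (bform X p q) | H2xR \<Rightarrow> arcosh (bform X p q))"

definition tmetric :: "geom \<Rightarrow> real^3 \<Rightarrow> real^3 \<Rightarrow> real" where
  "tmetric X u w = sgn_geom X * bform X u w"

definition tnorm :: "geom \<Rightarrow> real^3 \<Rightarrow> real" where
  "tnorm X u = sqrt (tmetric X u u)"

text \<open>Initial direction at p (on the unit surface) of the geodesic towards q.\<close>
definition tdir :: "geom \<Rightarrow> real^3 \<Rightarrow> real^3 \<Rightarrow> real^3" where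
  "tdir X p q = q - bform X p q *\<^sub>R p"

definition det3 :: "real^3 \<Rightarrow> real^3 \<Rightarrow> real^3 \<Rightarrow> real" where
  "det3 a b c = a$1 * (b$2 * c$3 - b$3 * c$2) - a$2 * (b$1 * c$3 - b$3 * c$1)
               + a$3 * (b$1 * c$2 - b$2 * c$1)"

text \<open>Directed angle q1 p q2 at p in the unit surface, measured from the direction
  towards q1 to the direction towards q2; the tangent plane at p is oriented by
  det(p,u,w) > 0.\<close>
definition dir_angle :: "geom \<Rightarrow> real^3 \<Rightarrow> real^3 \<Rightarrow> real^3 \<Rightarrow> real" where
  "dir_angle X q1 p q2 =
     (let u = tdir X p q1; w = tdir X p q2 in
      THE g. - pi < g \<and> g \<le> pi \<and>
        cos g = tmetric X u w / (tnorm X u * tnorm X w) \<and>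
        sin g = det3 p u w / (tnorm X u * tnorm X w))"

definition e0 :: "real^3" where
  "e0 = vector [1, 0, 0]"

text \<open>Isometries of the unit surface, extended linearly.\<close>
definition surf_isom :: "geom \<Rightarrow> (real^3 \<Rightarrow> real^3) \<Rightarrow> bool" where
  "surf_isom X A = (linear A \<and> (\<forall>p q. bform X (A p) (A q) = bform X p q) \<and>
                    (X = H2xR \<longrightarrow> (A e0)$1 > 0))"

text \<open>Isometries of X: compositions of fibre translations and surface isometries.\<close>
definition X_isom :: "geom \<Rightarrow> (real^3 \<Rightarrow> real^3) \<Rightarrow> bool" where
  "X_isom X L = (\<exists>s A. surf_isom X A \<and> L = (\<lambda>p. exp s *\<^sub>R A p))"

text \<open>Translation curve from E0 (point at parameter tau) and its unit tangent at E0.\<close>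
definition tcurve :: "geom \<Rightarrow> real \<Rightarrow> real \<Rightarrow> real \<Rightarrow> real^3" where
  "tcurve X tau v u = vector [exp (tau * sin v) * CC X (tau * cos v),
                              exp (tau * sin v) * SS X (tau * cos v) * cos u,
                              exp (tau * sin v) * SS X (tau * cos v) * sin u]"

definition tangent0 :: "real \<Rightarrow> real \<Rightarrow> real^3" where
  "tangent0 v u = vector [sin v, cos v * cos u, cos v * sin u]"

text \<open>Tangent vectors at p of the translation curves drawn from p to q (velocity
  vector, of length tau, of the curve L o tcurve on [0,tau]); the curve is required
  to project to a shortest geodesic of the unit surface.\<close>
definition trans_tangents :: "geom \<Rightarrow> real^3 \<Rightarrow> real^3 \<Rightarrow> (real^3) set" where
  "trans_tangents X p q = {tau *\<^sub>R L (tangent0 v u) | tau v u L.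
      X_isom X L \<and> L e0 = p \<and> tau \<ge> 0 \<and> L (tcurve X tau v u) = q \<and>
      tau * \<bar>cos v\<bar> = surf_dist X (proj X p) (proj X q)}"

definition tl_surface :: "geom \<Rightarrow> real^3 \<Rightarrow> real^3 \<Rightarrow> real^3 \<Rightarrow> (real^3) set" where
  "tl_surface X p1 p2 p3 = {p. in_X X p \<and>
     (\<exists>w1 w2 w3. w1 \<in> trans_tangents X p p1 \<and> w2 \<in> trans_tangents X p p2 \<and>
        w3 \<in> trans_tangents X p p3 \<and>
        (\<exists>a b c. (a, b, c) \<noteq> (0, 0, 0) \<and> a *\<^sub>R w1 + b *\<^sub>R w2 + c *\<^sub>R w3 = 0))}"

end

theory Submission
  imports Defs
begin

text \<open>
  Let P be the projection of p to the unit surface and complete it to a positively oriented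
  frame (P, f2, f3) that is orthonormal for the form of the unit surface. The linear map taking
  the standard basis to this frame, scaled by the fibre norm of p, is an isometry of X taking E0
  to p. In the frame coordinates the translation curve from p to q leaves p with tangent
  (l, d cos u, d sin u), where l is the difference of the fibre coordinates of q and p, d is the
  surface distance from P to the projection of q, and u is the polar angle of the geodesic
  direction towards it (well defined because the two projections are not antipodal). The
  determinant of three such tangents is the sum of the terms d_i d_j sin (u_j - u_i) l_k, and
  sin (u_j - u_i) is the sine of the directed angle at P, so the hypothesis says that this
  determinant vanishes and the three tangents are linearly dependent.
\<close>

lemma sgn_geom_mult_self [simp]: "sgn_geom X * sgn_geom X = 1"
  by (cases X) (simp_all add: sgn_geom_def)

lemma bform_commute: "bform X p q = bform X q p"
  by (simp add: bform_def algebra_simps)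

lemma bform_add_left [simp]: "bform X (u + v) q = bform X u q + bform X v q"
  and bform_scaleR_left [simp]: "bform X (a *\<^sub>R u) q = a * bform X u q"
  and bform_add_right [simp]: "bform X q (u + v) = bform X q u + bform X q v"
  and bform_scaleR_right [simp]: "bform X q (a *\<^sub>R u) = a * bform X q u"
  and bform_zero_left [simp]: "bform X 0 q = 0"
  by (simp_all add: bform_def algebra_simps)

lemma bform_nondegenerate:
  assumes "\<And>y. bform X x y = 0"
  shows "x = 0"
proof -
  have "bform X x (vector [1, 0, 0]) = 0" "bform X x (vector [0, 1, 0]) = 0"
    "bform X x (vector [0, 0, 1]) = 0"
    using assms by blast+
  then show ?thesis
    by (cases X) (simp_all add: bform_def sgn_geom_def vec_eq_iff forall_3)
qed

section \<open>Oriented orthonormal frames\<close>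

definition frame_map :: "real^3 \<Rightarrow> real^3 \<Rightarrow> real^3 \<Rightarrow> real^3 \<Rightarrow> real^3" where
  "frame_map P f2 f3 x = x$1 *\<^sub>R P + x$2 *\<^sub>R f2 + x$3 *\<^sub>R f3"

definition oriented_frame :: "geom \<Rightarrow> real^3 \<Rightarrow> real^3 \<Rightarrow> real^3 \<Rightarrow> bool" where
  "oriented_frame X P f2 f3 \<longleftrightarrow>
     bform X P P = 1 \<and> bform X P f2 = 0 \<and> bform X P f3 = 0 \<and> bform X f2 f3 = 0 \<and>
     bform X f2 f2 = sgn_geom X \<and> bform X f3 f3 = sgn_geom X \<and> det3 P f2 f3 = 1"

lemma linear_frame_map: "linear (frame_map P f2 f3)"
  by (rule linearI) (simp_all add: frame_map_def algebra_simps)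

lemma frame_map_e0: "frame_map P f2 f3 e0 = P"
  by (simp add: frame_map_def e0_def)

lemma bform_frame_map:
  assumes "oriented_frame X P f2 f3"
  shows "bform X (frame_map P f2 f3 x) (frame_map P f2 f3 y) = bform X x y"
  using assms bform_commute[of X P f2] bform_commute[of X P f3] bform_commute[of X f2 f3]
  by (simp add: oriented_frame_def frame_map_def bform_def[of X x y] algebra_simps)

lemma bform_frame_map_basis:
  assumes "oriented_frame X P f2 f3"
  shows "bform X P (frame_map P f2 f3 x) = x$1"
    and "bform X f2 (frame_map P f2 f3 x) = sgn_geom X * x$2"
    and "bform X f3 (frame_map P f2 f3 x) = sgn_geom X * x$3"
  using assms bform_commute[of X P f2] bform_commute[of X P f3] bform_commute[of X f2 f3]
  by (simp_all add: oriented_frame_def frame_map_def)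

lemma frame_map_coords:
  assumes F: "oriented_frame X P f2 f3"
  shows "Q = frame_map P f2 f3
           (vector [bform X P Q, sgn_geom X * bform X f2 Q, sgn_geom X * bform X f3 Q])"
proof -
  let ?A = "frame_map P f2 f3"
  have "inj ?A"
  proof (rule linear_injective_0[OF linear_frame_map, THEN iffD2], intro allI impI)
    fix x assume "?A x = 0"
    then have "bform X x y = 0" for y
      using bform_frame_map[OF F, of x y] by simp
    then show "x = 0" by (rule bform_nondegenerate)
  qed
  then obtain x where Q: "Q = ?A x"
    using linear_injective_imp_surjective[OF linear_frame_map] by (metis surjD)
  then have "bform X P Q = x$1" "bform X f2 Q = sgn_geom X * x$2" "bform X f3 Q = sgn_geom X * x$3"
    using bform_frame_map_basis[OF F] by simp_all
  then have "x = vector [bform X P Q, sgn_geom X * bform X f2 Q, sgn_geom X * bform X f3 Q]"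
    by (simp add: vec_eq_iff forall_3 mult.assoc[symmetric])
  then show ?thesis using Q by simp
qed

lemma oriented_frame_exists:
  assumes unit: "bform X P P = 1"
  shows "\<exists>f2 f3. oriented_frame X P f2 f3"
proof -
  define s where "s = sgn_geom X"
  have ss: "s * s = 1" unfolding s_def by simp
  define x y z where "x = P$1" and "y = P$2" and "z = P$3"
  have P: "P = vector [x, y, z]"
    unfolding x_def y_def z_def by (simp add: vec_eq_iff forall_3)
  have u: "x*x + s*(y*y + z*z) = 1"
    using unit unfolding bform_def x_def y_def z_def s_def by simp
  show ?thesis
  proof (cases "y*y + z*z = 0")
    case True
    then have "y = 0" "z = 0" "x*x = 1" using u by simp_all
    then have "oriented_frame X P (vector [0, 1, 0]) (vector [0, 0, x])"
      unfolding oriented_frame_def P bform_def det3_def s_def[symmetric] using ss by simp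
    then show ?thesis by blast
  next
    case False
    define r where "r = sqrt (y*y + z*z)"
    have "y*y + z*z > 0" using False by (simp add: sum_squares_gt_zero_iff)
    then have rr: "r*r = y*y + z*z" and "r > 0"
      unfolding r_def by simp_all
    define k where "k = 1 / r"
    have kr: "k * r = 1" using \<open>r > 0\<close> unfolding k_def by simp
    \<comment> \<open>f2 lies in the plane spanned by e0 and P, f3 is orthogonal to it\<close>
    have "oriented_frame X P (vector [-s*r, x*y*k, x*z*k]) (vector [0, -z*k, y*k])"
      unfolding oriented_frame_def P bform_def det3_def s_def[symmetric]
      using rr kr u ss by (simp; intro conjI; algebra)
    then show ?thesis by blast
  qed
qed

lemma surf_isom_frame_map:
  assumes "oriented_frame X P f2 f3" and "X = H2xR \<Longrightarrow> P$1 > 0"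
  shows "surf_isom X (frame_map P f2 f3)"
  using assms linear_frame_map bform_frame_map by (simp add: surf_isom_def frame_map_e0)

section \<open>Polar coordinates on the unit surface\<close>

lemma bform_self_pos: "in_X X p \<Longrightarrow> bform X p p > 0"
  by (cases X) (auto simp: in_X_def bform_def sgn_geom_def power2_eq_square)

lemma fnorm_pos: "in_X X p \<Longrightarrow> fnorm X p > 0"
  by (simp add: fnorm_def bform_self_pos)

lemma bform_proj_self: "in_X X p \<Longrightarrow> bform X (proj X p) (proj X p) = 1"
  using bform_self_pos[of X p] by (simp add: proj_def fnorm_def)

lemma fnorm_scaleR_proj: "in_X X p \<Longrightarrow> fnorm X p *\<^sub>R proj X p = p"
  using fnorm_pos[of X p] by (simp add: proj_def)

lemma proj_H2xR_first_pos: "in_X H2xR p \<Longrightarrow> (proj H2xR p)$1 > 0"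
  using fnorm_pos[of H2xR p] by (simp add: proj_def in_X_def)

lemma in_X_e0: "in_X X e0"
  by (cases X) (simp_all add: in_X_def e0_def)

lemma bform_H2xR_pos:
  assumes "bform H2xR P P = 1" "bform H2xR Q Q = 1" "P$1 > 0" "Q$1 > 0"
  shows "bform H2xR P Q > 0"
proof -
  define x y z x' y' z' where "x = P$1" "y = P$2" "z = P$3" "x' = Q$1" "y' = Q$2" "z' = Q$3"
  have hyp: "x*x = 1 + (y*y + z*z)" "x'*x' = 1 + (y'*y' + z'*z')" "x > 0" "x' > 0"
    using assms unfolding x_y_z_x'_y'_z'_def by (simp_all add: bform_def sgn_geom_def)
  have "(y*y' + z*z')^2 \<le> (y*y + z*z) * (y'*y' + z'*z')"
    using sum_squares_ge_zero[of "y*z' - z*y'" 0] by (simp add: power2_eq_square algebra_simps)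
  also have "\<dots> < (1 + (y*y + z*z)) * (1 + (y'*y' + z'*z'))"
    by (simp add: algebra_simps add_pos_nonneg)
  also have "\<dots> = (x*x')^2"
    unfolding hyp(1,2)[symmetric] by algebra
  finally have "y*y' + z*z' < x*x'"
    by (rule power2_less_imp_less) (use hyp in simp)
  then show ?thesis
    unfolding x_y_z_x'_y'_z'_def by (simp add: bform_def sgn_geom_def)
qed

lemma surf_dist_cos_sin:
  assumes unit: "(bform X P Q)^2 + sgn_geom X * r^2 = 1" and "r \<ge> 0"
    and H2: "X = H2xR \<Longrightarrow> bform X P Q > 0"
  shows "CC X (surf_dist X P Q) = bform X P Q" and "SS X (surf_dist X P Q) = r"
    and "surf_dist X P Q \<ge> 0"
proof -
  define c where "c = bform X P Q"
  have "CC X (surf_dist X P Q) = c \<and> SS X (surf_dist X P Q) = r \<and> surf_dist X P Q \<ge> 0"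
  proof (cases X)
    case S2xR
    with unit have "c^2 = 1 - r^2" by (simp add: c_def sgn_geom_def)
    then have "\<bar>c\<bar> \<le> 1" "sqrt (1 - c^2) = r"
      using \<open>r \<ge> 0\<close> abs_square_le_1[of c] by simp_all
    then show ?thesis
      using S2xR by (simp add: CC_def SS_def surf_dist_def c_def sin_arccos_abs arccos_lbound)
  next
    case H2xR
    with unit H2 have "c^2 = 1 + r^2" "c > 0" by (simp_all add: c_def sgn_geom_def)
    then have "c \<ge> 1" "sqrt (c^2 - 1) = r"
      using \<open>r \<ge> 0\<close> abs_square_less_1[of c] by (auto simp: not_le[symmetric])
    then show ?thesis
      using H2xR by (simp add: CC_def SS_def surf_dist_def c_def sinh_arcosh_real)
  qed
  then show "CC X (surf_dist X P Q) = bform X P Q" "SS X (surf_dist X P Q) = r"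
    "surf_dist X P Q \<ge> 0"
    by (simp_all add: c_def)
qed

lemma surf_dist_eq_0: "bform X P Q = 1 \<Longrightarrow> surf_dist X P Q = 0"
  by (cases X) (simp_all add: surf_dist_def)

lemma polar_coords_exist: "\<exists>t. sqrt (a^2 + b^2) * cos t = a \<and> sqrt (a^2 + b^2) * sin t = b"
proof -
  let ?z = "Complex a b"
  have "Re (rcis (cmod ?z) (Arg ?z)) = a" "Im (rcis (cmod ?z) (Arg ?z)) = b"
    by (simp_all only: rcis_cmod_Arg complex.sel)
  then show ?thesis
    by (auto simp: complex_norm)
qed

definition polar_angle_in_frame ::
    "geom \<Rightarrow> real^3 \<Rightarrow> real^3 \<Rightarrow> real^3 \<Rightarrow> real^3 \<Rightarrow> real \<Rightarrow> bool" where
  "polar_angle_in_frame X P f2 f3 Q u \<longleftrightarrow> surf_dist X P Q = 0 \<or>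
     (\<exists>S>0. tdir X P Q = S *\<^sub>R (cos u *\<^sub>R f2 + sin u *\<^sub>R f3))"

lemma surf_polar_coords:
  assumes F: "oriented_frame X P f2 f3" and Q: "bform X Q Q = 1"
    and H2: "X = H2xR \<Longrightarrow> bform X P Q > 0"
  defines "d \<equiv> surf_dist X P Q"
  obtains u where "Q = frame_map P f2 f3 (vector [CC X d, SS X d * cos u, SS X d * sin u])"
    and "d \<ge> 0" and "Q \<noteq> - P \<Longrightarrow> polar_angle_in_frame X P f2 f3 Q u"
proof -
  define c a b where "c = bform X P Q" and "a = sgn_geom X * bform X f2 Q"
    and "b = sgn_geom X * bform X f3 Q"
  have Qc: "Q = frame_map P f2 f3 (vector [c, a, b])"
    unfolding c_def a_def b_def by (rule frame_map_coords[OF F])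
  have "1 = bform X (vector [c, a, b]) (vector [c, a, b])"
    using Q bform_frame_map[OF F] Qc by metis
  then have unit: "c^2 + sgn_geom X * (sqrt (a^2 + b^2))^2 = 1"
    by (simp add: bform_def power2_eq_square)
  have C: "CC X d = c" and S: "SS X d = sqrt (a^2 + b^2)" and "d \<ge> 0"
    using surf_dist_cos_sin[OF unit[unfolded c_def]] H2 unfolding d_def c_def by auto
  obtain u where u: "SS X d * cos u = a" "SS X d * sin u = b"
    using polar_coords_exist[of a b] unfolding S by blast
  have S_pos: "0 < SS X d" if "0 < d" "Q \<noteq> - P"
  proof (rule ccontr)
    assume "\<not> 0 < SS X d"
    then have "a = 0" "b = 0" using S by (simp_all add: sum_power2_gt_zero_iff)
    with unit have "c = 1 \<or> c = -1" by (simp add: power2_eq_1_iff)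
    moreover have "c \<noteq> 1" using surf_dist_eq_0 \<open>0 < d\<close> unfolding c_def d_def by fastforce
    ultimately have "Q = - P"
      unfolding Qc \<open>a = 0\<close> \<open>b = 0\<close> by (simp add: frame_map_def)
    with \<open>Q \<noteq> - P\<close> show False ..
  qed
  have "tdir X P Q = SS X d *\<^sub>R (cos u *\<^sub>R f2 + sin u *\<^sub>R f3)"
  proof -
    have "tdir X P Q = Q - c *\<^sub>R P"
      by (simp add: tdir_def c_def)
    also have "\<dots> = SS X d *\<^sub>R (cos u *\<^sub>R f2 + sin u *\<^sub>R f3)"
      by (subst Qc) (simp add: frame_map_def u[symmetric] algebra_simps)
    finally show ?thesis .
  qed
  with S_pos \<open>d \<ge> 0\<close> have "Q \<noteq> - P \<Longrightarrow> polar_angle_in_frame X P f2 f3 Q u"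
    unfolding polar_angle_in_frame_def d_def[symmetric] by (auto simp: less_eq_real_def)
  then show ?thesis
    using that[of u] Qc \<open>d \<ge> 0\<close> unfolding C u by blast
qed

section \<open>Directed angles\<close>

lemma sin_principal_angle:
  assumes "c^2 + sn^2 = 1"
  shows "sin (THE g. - pi < g \<and> g \<le> pi \<and> cos g = c \<and> sin g = sn) = sn"
proof -
  let ?z = "Complex c sn"
  have "cmod ?z = 1" using assms by (simp add: complex_norm)
  then have "?z \<noteq> 0" by auto
  have "(THE g. - pi < g \<and> g \<le> pi \<and> cos g = c \<and> sin g = sn) = Arg ?z"
  proof (rule the_equality)
    show "- pi < Arg ?z \<and> Arg ?z \<le> pi \<and> cos (Arg ?z) = c \<and> sin (Arg ?z) = sn"
      using Arg_bounded[of ?z] cos_Arg[OF \<open>?z \<noteq> 0\<close>] sin_Arg[OF \<open>?z \<noteq> 0\<close>] \<open>cmod ?z = 1\<close>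
      by simp
  next
    fix g assume "- pi < g \<and> g \<le> pi \<and> cos g = c \<and> sin g = sn"
    then show "g = Arg ?z"
      by (intro Arg_unique'[of 1, symmetric]) (auto simp: complex_eq_iff)
  qed
  then show ?thesis
    using sin_Arg[OF \<open>?z \<noteq> 0\<close>] \<open>cmod ?z = 1\<close> by simp
qed

lemma sin_dir_angle_in_frame:
  assumes F: "oriented_frame X P f2 f3"
    and i: "tdir X P Qi = Si *\<^sub>R (cos ui *\<^sub>R f2 + sin ui *\<^sub>R f3)" "Si > 0"
    and j: "tdir X P Qj = Sj *\<^sub>R (cos uj *\<^sub>R f2 + sin uj *\<^sub>R f3)" "Sj > 0"
  shows "sin (dir_angle X Qi P Qj) = sin (uj - ui)"
proof -
  have tmetric_comb: "tmetric X (a *\<^sub>R f2 + b *\<^sub>R f3) (a' *\<^sub>R f2 + b' *\<^sub>R f3) = a * a' + b * b'"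
    for a b a' b'
    using F bform_commute[of X f2 f3] by (simp add: oriented_frame_def tmetric_def algebra_simps)
  have "tnorm X (tdir X P Qi) = Si" "tnorm X (tdir X P Qj) = Sj"
    using i(2) j(2) unfolding tnorm_def i(1) j(1) scaleR_add_right scaleR_scaleR tmetric_comb
    by (simp_all add: power2_eq_square[symmetric] algebra_simps flip: distrib_left)
  moreover have "tmetric X (tdir X P Qi) (tdir X P Qj) = Si * Sj * cos (uj - ui)"
    unfolding i(1) j(1) scaleR_add_right scaleR_scaleR tmetric_comb by (simp add: cos_diff algebra_simps)
  moreover have "det3 P (tdir X P Qi) (tdir X P Qj) = Si * Sj * sin (uj - ui) * det3 P f2 f3"
    unfolding i(1) j(1) by (simp add: det3_def sin_diff algebra_simps)
  ultimately show ?thesis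
    using F i(2) j(2) sin_principal_angle[of "cos (uj - ui)" "sin (uj - ui)"]
    by (simp add: dir_angle_def Let_def oriented_frame_def)
qed

lemma mult_sin_dir_angle_in_frame:
  assumes "oriented_frame X P f2 f3"
    and "polar_angle_in_frame X P f2 f3 Qi ui" "polar_angle_in_frame X P f2 f3 Qj uj"
  shows "surf_dist X P Qi * surf_dist X P Qj * sin (dir_angle X Qi P Qj)
       = surf_dist X P Qi * surf_dist X P Qj * sin (uj - ui)"
  using assms sin_dir_angle_in_frame unfolding polar_angle_in_frame_def by fastforce

section \<open>Tangents of translation curves\<close>

lemma tcurve_cylindrical:
  assumes "tau * cos v = d" and "tau * sin v = l"
  shows "tcurve X tau v u = exp l *\<^sub>R vector [CC X d, SS X d * cos u, SS X d * sin u]"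
    and "tau *\<^sub>R tangent0 v u = vector [l, d * cos u, d * sin u]"
  using assms by (simp_all add: tcurve_def tangent0_def vec_eq_iff forall_3 mult.assoc[symmetric])

lemma X_isom_frame_map:
  assumes p: "in_X X p" and F: "oriented_frame X (proj X p) f2 f3"
  shows "X_isom X (\<lambda>x. fnorm X p *\<^sub>R frame_map (proj X p) f2 f3 x)"
    and "fnorm X p *\<^sub>R frame_map (proj X p) f2 f3 e0 = p"
proof -
  have "exp (ln (fnorm X p)) = fnorm X p"
    using fnorm_pos[OF p] by simp
  then show "X_isom X (\<lambda>x. fnorm X p *\<^sub>R frame_map (proj X p) f2 f3 x)"
    using surf_isom_frame_map[OF F] proj_H2xR_first_pos p unfolding X_isom_def by metis
  show "fnorm X p *\<^sub>R frame_map (proj X p) f2 f3 e0 = p"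
    using fnorm_scaleR_proj[OF p] by (simp add: frame_map_e0)
qed

definition trans_tangent_coords :: "geom \<Rightarrow> real^3 \<Rightarrow> real^3 \<Rightarrow> real \<Rightarrow> real^3" where
  "trans_tangent_coords X p q u = vector [ln (fnorm X q / fnorm X p),
     surf_dist X (proj X p) (proj X q) * cos u, surf_dist X (proj X p) (proj X q) * sin u]"

lemma trans_tangent_in_frame:
  assumes p: "in_X X p" and q: "in_X X q" and F: "oriented_frame X (proj X p) f2 f3"
    and nonantipodal: "proj X p \<noteq> - proj X q"
  obtains u where
    "fnorm X p *\<^sub>R frame_map (proj X p) f2 f3 (trans_tangent_coords X p q u) \<in> trans_tangents X p q"
    and "polar_angle_in_frame X (proj X p) f2 f3 (proj X q) u"
proof -
  define P Q d l where "P = proj X p" and "Q = proj X q" and "d = surf_dist X P Q"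
    and "l = ln (fnorm X q / fnorm X p)"
  define L where "L = (\<lambda>x. fnorm X p *\<^sub>R frame_map P f2 f3 x)"
  have "X = H2xR \<Longrightarrow> bform X P Q > 0"
    using bform_H2xR_pos bform_proj_self proj_H2xR_first_pos p q unfolding P_def Q_def by blast
  then obtain u where Qu: "Q = frame_map P f2 f3 (vector [CC X d, SS X d * cos u, SS X d * sin u])"
    and "d \<ge> 0" and polar: "Q \<noteq> - P \<Longrightarrow> polar_angle_in_frame X P f2 f3 Q u"
    using surf_polar_coords F bform_proj_self[OF q] unfolding P_def Q_def d_def by blast
  obtain tau v where tv: "tau * cos v = d" "tau * sin v = l" and "tau \<ge> 0"
    using polar_coords_exist[of d l] by (metis real_sqrt_ge_zero zero_le_power2 add_nonneg_nonneg)
  have "X_isom X L" "L e0 = p"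
    using X_isom_frame_map[OF p F] unfolding L_def P_def by blast+
  moreover have "L (tcurve X tau v u) = q"
    using fnorm_pos[OF p] fnorm_pos[OF q] fnorm_scaleR_proj[OF q]
    unfolding L_def tcurve_cylindrical(1)[OF tv] linear_scale[OF linear_frame_map] Qu[symmetric]
    by (simp add: l_def Q_def)
  moreover have "tau * \<bar>cos v\<bar> = surf_dist X (proj X p) (proj X q)"
    using \<open>tau \<ge> 0\<close> \<open>d \<ge> 0\<close> tv(1) unfolding d_def P_def Q_def
    by (metis abs_mult abs_of_nonneg)
  moreover have "tau *\<^sub>R L (tangent0 v u) = L (vector [l, d * cos u, d * sin u])"
    unfolding L_def tcurve_cylindrical(2)[OF tv, symmetric] linear_scale[OF linear_frame_map]
    by simp
  ultimately have "L (vector [l, d * cos u, d * sin u]) \<in> trans_tangents X p q"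
    unfolding trans_tangents_def using \<open>tau \<ge> 0\<close> by (metis (mono_tags, lifting) mem_Collect_eq)
  then show ?thesis
    using that polar nonantipodal
    unfolding L_def P_def Q_def d_def l_def trans_tangent_coords_def by force
qed

lemma det3_cylindrical:
  "det3 (vector [l1, d1 * cos u1, d1 * sin u1]) (vector [l2, d2 * cos u2, d2 * sin u2])
        (vector [l3, d3 * cos u3, d3 * sin u3])
   = d1 * d2 * sin (u2 - u1) * l3 + d2 * d3 * sin (u3 - u2) * l1 + d3 * d1 * sin (u1 - u3) * l2"
  by (simp add: det3_def sin_diff algebra_simps)

lemma det3_eq_0_imp_dependent_image:
  fixes x y z :: "real^3" and f :: "real^3 \<Rightarrow> 'a::real_vector"
  assumes "linear f" and "det3 x y z = 0"
  obtains a b c where "(a, b, c) \<noteq> (0, 0, 0)" "a *\<^sub>R f x + b *\<^sub>R f y + c *\<^sub>R f z = 0"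
proof -
  define M :: "real^3^3" where "M = transpose (vector [x, y, z])"
  have "det M = 0"
    using assms(2) unfolding M_def det_transpose det_3 det3_def transpose_def
    by (simp add: algebra_simps)
  then obtain v where v: "M *v v = 0" "v \<noteq> 0"
    using invertible_det_nz invertible_left_inverse matrix_left_invertible_ker by metis
  then have "v$1 *\<^sub>R x + v$2 *\<^sub>R y + v$3 *\<^sub>R z = 0"
    unfolding M_def
    by (simp add: vec_eq_iff forall_3 matrix_vector_mult_def transpose_def sum_3 algebra_simps)
  then have "f (v$1 *\<^sub>R x + v$2 *\<^sub>R y + v$3 *\<^sub>R z) = 0"
    using linear_0[OF assms(1)] by simp
  then have "v$1 *\<^sub>R f x + v$2 *\<^sub>R f y + v$3 *\<^sub>R f z = 0"
    by (simp only: linear_add[OF assms(1)] linear_scale[OF assms(1)])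
  moreover have "(v$1, v$2, v$3) \<noteq> (0, 0, 0)"
    using v(2) by (auto simp: vec_eq_iff forall_3)
  ultimately show ?thesis using that by blast
qed

theorem theorem4p10:
  fixes X :: geom and p2 p3 p :: "real^3"
  assumes "in_X X p2" and "in_X X p3" and "in_X X p"
    and nonantipodal: "\<forall>q \<in> {e0, p2, p3}. proj X p \<noteq> - proj X q"
    and eq: "(let P' = proj X p; P1' = proj X e0; P2' = proj X p2; P3' = proj X p3;
               d1 = surf_dist X P' P1'; d2 = surf_dist X P' P2'; d3 = surf_dist X P' P3';
               g1 = dir_angle X P2' P' P3'; g2 = dir_angle X P3' P' P1';
               g3 = dir_angle X P1' P' P2'
             in d1 * d2 * sin g3 * ln (fnorm X p3 / fnorm X p)
              + d2 * d3 * sin g1 * ln (fnorm X e0 / fnorm X p)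
              + d3 * d1 * sin g2 * ln (fnorm X p2 / fnorm X p)) = 0"
  shows "p \<in> tl_surface X e0 p2 p3"
proof -
  obtain f2 f3 where F: "oriented_frame X (proj X p) f2 f3"
    using oriented_frame_exists bform_proj_self[OF \<open>in_X X p\<close>] by blast
  let ?w = "\<lambda>q u. fnorm X p *\<^sub>R frame_map (proj X p) f2 f3 (trans_tangent_coords X p q u)"
  let ?polar = "\<lambda>q u. polar_angle_in_frame X (proj X p) f2 f3 (proj X q) u"
  have "\<exists>u. ?w q u \<in> trans_tangents X p q \<and> ?polar q u" if "q \<in> {e0, p2, p3}" for q
    using trans_tangent_in_frame[OF \<open>in_X X p\<close> _ F, of q] that assms(1,2) in_X_e0 nonantipodal
    by blast
  then obtain u1 u2 u3 where
    w: "?w e0 u1 \<in> trans_tangents X p e0" "?w p2 u2 \<in> trans_tangents X p p2"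
       "?w p3 u3 \<in> trans_tangents X p p3" and
    polar: "?polar e0 u1" "?polar p2 u2" "?polar p3 u3"
    by (meson insertCI)
  have "det3 (trans_tangent_coords X p e0 u1) (trans_tangent_coords X p p2 u2)
          (trans_tangent_coords X p p3 u3) = 0"
    using eq unfolding trans_tangent_coords_def det3_cylindrical
      mult_sin_dir_angle_in_frame[OF F polar(1,2), symmetric]
      mult_sin_dir_angle_in_frame[OF F polar(2,3), symmetric]
      mult_sin_dir_angle_in_frame[OF F polar(3,1), symmetric]
    by (simp only: Let_def)
  then obtain a b c where "(a, b, c) \<noteq> (0, 0, 0)" "a *\<^sub>R ?w e0 u1 + b *\<^sub>R ?w p2 u2 + c *\<^sub>R ?w p3 u3 = 0"
    by (rule det3_eq_0_imp_dependent_image[OF linear_compose_scale_right[OF linear_frame_map]])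
  then show ?thesis
    unfolding tl_surface_def using \<open>in_X X p\<close> w by blast
qed

end
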